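(* Let $n$ and $e$ be positive integers, let $s \in \{1,2,3\}$, and let $S = \{m_1,\dots,m_e\}$ be a set of integers which is a Sidon-type set of strength $s$ in $\mathbb{Z}_n$. Let $A = A(S)$ be the $2e \times n$ matrix whose rows are, in order, $s(m_1), c(m_1), s(m_2), c(m_2), \dots, s(m_e), c(m_e)$. If $f:\mathbb{R}^{2e}\to\mathbb{R}$ is a polynomial with $f \in \Phi_s$ (with respect to the variables $x_0,\dots,x_{2e-1}$), then $f(A) = 0$.
   Context: For an integer $m$, $s(m), c(m) \in \mathbb{R}^n$ are the vectors $s(m) = \big(\sin(\tfrac{2\pi}{n} km)\big)_{k=1}^n$ and $c(m) = \big(\cos(\tfrac{2\pi}{n} km)\big)_{k=1}^n$. For a matrix $U$ with columns $u_1,\dots,u_n \in \mathbb{R}^{D+1}$ and a polynomial $f(x_0,\dots,x_D)$, $f(U) = \sum_{k=1}^n f(u_k)$. In variables $x_0,\dots,x_D$: $\Phi_1 = \{x_i : 0\le i\le D\}$; $\Phi_2 = \{x_ix_j : 0\le i<j\le D\} \cup \{x_i^2 - x_{i+1}^2 : 0 \le i \le D-1\}$; $\Phi_3 = \{x_ix_jx_k : 0\le i<j<k\le D\}\cup\{x_i^3 - 3x_ix_j^2 : 0\le i\ne j\le D\}$. A set $S$ of integers is a Sidon-type set of strength $t$ in $\mathbb{Z}_n$ if no non-trivial sum $\varepsilon_1x_1+\cdots+\varepsilon_tx_t$ with $\varepsilon_i\in\{0,\pm1\}$ and $x_i\in S$ (not necessarily distinct) is congruent to $0 \bmod n$; a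 sum is non-trivial if some $\varepsilon_i \ne 0$ and no element of $S$ appears with both coefficient $+1$ and coefficient $-1$. *)

theory Defs
  imports Complex_Main "HOL-Number_Theory.Cong"
begin

definition sidon_type :: "int set \<Rightarrow> nat \<Rightarrow> nat \<Rightarrow> bool" where
  "sidon_type S t n \<longleftrightarrow>
     (\<forall>(\<epsilon>::nat \<Rightarrow> int) (x::nat \<Rightarrow> int).
        (\<forall>i<t. \<epsilon> i \<in> {-1, 0, 1} \<and> x i \<in> S) \<and>
        (\<exists>i<t. \<epsilon> i \<noteq> 0) \<and>
        \<not> (\<exists>i<t. \<exists>j<t. \<epsilon> i = 1 \<and> \<epsilon> j = -1 \<and> x i = x j)
        \<longrightarrow> \<not> [(\<Sum>i<t. \<epsilon> i * x i) = 0] (mod int n))"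

text \<open>Polynomials in variables x_0..x_D, represented by their evaluation maps
  on points x :: nat => real (only coordinates 0..D are used).\<close>
definition Phi1 :: "nat \<Rightarrow> ((nat \<Rightarrow> real) \<Rightarrow> real) set" where
  "Phi1 D = {(\<lambda>x. x i) | i. i \<le> D}"

definition Phi2 :: "nat \<Rightarrow> ((nat \<Rightarrow> real) \<Rightarrow> real) set" where
  "Phi2 D = {(\<lambda>x. x i * x j) | i j. i < j \<and> j \<le> D}
          \<union> {(\<lambda>x. x i ^ 2 - x (i + 1) ^ 2) | i. i + 1 \<le> D}"

definition Phi3 :: "nat \<Rightarrow> ((nat \<Rightarrow> real) \<Rightarrow> real) set" where
  "Phi3 D = {(\<lambda>x. x i * x j * x k) | i j k. i < j \<and> j < k \<and> k \<le> D}
          \<union> {(\<lambda>x. x i ^ 3 - 3 * x i * x j ^ 2) | i j. i \<le> D \<and> j \<le> D \<and> i \<noteq> j}"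

definition Phi :: "nat \<Rightarrow> nat \<Rightarrow> ((nat \<Rightarrow> real) \<Rightarrow> real) set" where
  "Phi s D = (if s = 1 then Phi1 D else if s = 2 then Phi2 D else if s = 3 then Phi3 D else {})"

text \<open>Entry (r, k) (row r in 0..2e-1, column k in 1..n) of A(S): row 2j is s(m_j),
  row 2j+1 is c(m_j) (0-indexed m).\<close>
definition Amat :: "nat \<Rightarrow> nat \<Rightarrow> (nat \<Rightarrow> int) \<Rightarrow> nat \<Rightarrow> nat \<Rightarrow> real" where
  "Amat e n m r k =
     (if r < 2 * e then
        (if even r then sin (2 * pi / real n * real k * real_of_int (m (r div 2)))
         else cos (2 * pi / real n * real k * real_of_int (m (r div 2))))
      else 0)"

text \<open>f(U) = sum over the columns of U.\<close>
definition eval_cols :: "((nat \<Rightarrow> real) \<Rightarrow> real) \<Rightarrow> (nat \<Rightarrow> nat \<Rightarrow> real) \<Rightarrow> nat \<Rightarrow> real" where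
  "eval_cols f U n = (\<Sum>k = 1..n. f (\<lambda>r. U r k))"

end

theory Submission
  imports Defs
begin

text \<open>Since \<open>sin \<theta> = cos (\<theta> - \<pi>/2)\<close>, every entry of \<open>A(S)\<close> is a harmonic
  \<open>cos (\<theta>\<^sub>k m - \<phi>)\<close> with \<open>\<theta>\<^sub>k = 2\<pi>k/n\<close>. By the product-to-sum formulas, each
  \<open>f \<in> \<Phi>\<^sub>s\<close> turns a column into a linear combination of harmonics \<open>cos (\<theta>\<^sub>k c - \<phi>)\<close>
  whose frequencies \<open>c\<close> are non-trivial signed sums of at most \<open>s\<close> elements of \<open>S\<close>, hence
  \<open>c \<noteq> 0 (mod n)\<close> by the Sidon property; the only exception, the product of the sine and
  the cosine row of the same element, has \<open>c = 0\<close> but \<open>cos \<phi> = 0\<close>. Summing a harmonic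
  over \<open>k = 1..n\<close> gives \<open>n cos \<phi>\<close> if \<open>n\<close> divides \<open>c\<close> and \<open>0\<close> otherwise.\<close>

lemma sin_half_mult_sum_cos:
  "2 * sin (x / 2) * (\<Sum>k = 1..N. cos (real k * x - \<phi>))
     = sin ((real N + 1 / 2) * x - \<phi>) - sin (x / 2 - \<phi>)"
proof -
  define g where "g k = sin ((real k - 1 / 2) * x - \<phi>)" for k :: nat
  have "2 * sin (x / 2) * cos (real k * x - \<phi>) = g (Suc k) - g k" for k
  proof -
    have "2 * sin (x / 2) * cos (real k * x - \<phi>)
        = sin (real k * x - \<phi> + x / 2) - sin (real k * x - \<phi> - x / 2)"
      by (simp add: sin_add sin_diff)
    moreover have "real k * x - \<phi> + x / 2 = (real (Suc k) - 1 / 2) * x - \<phi>"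
      and "real k * x - \<phi> - x / 2 = (real k - 1 / 2) * x - \<phi>"
      by (simp_all add: algebra_simps)
    ultimately show ?thesis
      by (simp only: g_def)
  qed
  then have "2 * sin (x / 2) * (\<Sum>k = 1..N. cos (real k * x - \<phi>)) = (\<Sum>k = 1..N. g (Suc k) - g k)"
    by (simp add: sum_distrib_left)
  also have "\<dots> = g (Suc N) - g 1"
    by (rule sum_Suc_diff) simp
  finally show ?thesis
    by (simp add: g_def algebra_simps)
qed

definition root_sum :: "nat \<Rightarrow> (real \<Rightarrow> real) \<Rightarrow> real" where
  "root_sum n g = (\<Sum>k = 1..n. g (2 * pi / real n * real k))"

lemma root_sum_add: "root_sum n (\<lambda>t. f t + g t) = root_sum n f + root_sum n g"
  by (simp add: root_sum_def sum.distrib)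

lemma root_sum_diff: "root_sum n (\<lambda>t. f t - g t) = root_sum n f - root_sum n g"
  by (simp add: root_sum_def sum_subtractf)

lemma root_sum_cmult: "root_sum n (\<lambda>t. c * f t) = c * root_sum n f"
  by (simp add: root_sum_def sum_distrib_left)

lemma root_sum_divide: "root_sum n (\<lambda>t. f t / c) = root_sum n f / c"
  by (simp add: root_sum_def sum_divide_distrib)

lemma root_sum_cos:
  assumes "n > 0"
  shows "root_sum n (\<lambda>t. cos (t * of_int c - \<phi>)) = (if int n dvd c then real n * cos \<phi> else 0)"
proof (cases "int n dvd c")
  case True
  then obtain d where "c = int n * d" ..
  have "cos (2 * pi / real n * real k * of_int c - \<phi>) = cos \<phi>" for k
  proof -
    have "2 * pi / real n * real k * of_int c = 2 * pi * of_int (int k * d)"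
      using assms \<open>c = int n * d\<close> by simp
    then show ?thesis
      by (simp only: cos_diff cos_int_2pin sin_int_2pin)
  qed
  then show ?thesis
    using True by (simp add: root_sum_def)
next
  case False
  define x where "x = 2 * pi * of_int c / real n"
  have "sin (x / 2) \<noteq> 0"
  proof
    assume "sin (x / 2) = 0"
    then obtain i :: int where "x / 2 = of_int i * pi"
      by (auto simp: sin_zero_iff_int2)
    with assms have "of_int c = (of_int (int n * i) :: real)"
      by (simp add: x_def field_simps)
    with False show False
      by (metis dvd_triv_left of_int_eq_iff)
  qed
  moreover have "sin ((real n + 1 / 2) * x - \<phi>) = sin (x / 2 - \<phi>)"
  proof -
    have "(real n + 1 / 2) * x - \<phi> = (x / 2 - \<phi>) + 2 * pi * of_int c"
      using assms by (simp add: x_def field_simps)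
    then show ?thesis
      by (simp only: sin_add sin_int_2pin cos_int_2pin)
  qed
  ultimately have "(\<Sum>k = 1..n. cos (real k * x - \<phi>)) = 0"
    using sin_half_mult_sum_cos[of x \<phi> n] by simp
  moreover have "2 * pi / real n * real k * of_int c = real k * x" for k
    by (simp add: x_def)
  ultimately show ?thesis
    using False by (simp add: root_sum_def)
qed

lemma root_sum_cos_eq_0:
  assumes "n > 0" and "\<not> int n dvd c \<or> cos \<phi> = 0"
  shows "root_sum n (\<lambda>t. cos (t * of_int c - \<phi>)) = 0"
  using assms by (auto simp: root_sum_cos)

lemma cos_times_cos_times_cos:
  fixes \<alpha> \<beta> \<gamma> :: real
  shows "cos \<alpha> * cos \<beta> * cos \<gamma>
     = (cos (\<alpha> - \<beta> - \<gamma>) + cos (\<alpha> - \<beta> + \<gamma>) + cos (\<alpha> + \<beta> - \<gamma>) + cos (\<alpha> + \<beta> + \<gamma>)) / 4"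
    (is "_ = ?rhs")
proof -
  have "cos \<alpha> * cos \<beta> * cos \<gamma> = (cos (\<alpha> - \<beta>) * cos \<gamma> + cos (\<alpha> + \<beta>) * cos \<gamma>) / 2"
    by (simp only: cos_times_cos[of \<alpha> \<beta>]) (simp add: algebra_simps)
  also have "\<dots> = ?rhs"
    by (simp only: cos_times_cos) (simp add: field_simps)
  finally show ?thesis .
qed

lemma cos_squared_diff_cos_squared:
  fixes \<alpha> \<beta> :: real
  shows "cos \<alpha> ^ 2 - cos \<beta> ^ 2 = (cos (2 * \<alpha>) - cos (2 * \<beta>)) / 2"
  by (simp add: cos_double_cos)

lemma cos_cubed_minus_cos_times_cos_squared:
  fixes \<alpha> \<beta> :: real
  shows "cos \<alpha> ^ 3 - 3 * cos \<alpha> * cos \<beta> ^ 2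
     = (cos (3 * \<alpha>) - 3 * cos \<alpha> - 3 * cos (\<alpha> + 2 * \<beta>) - 3 * cos (\<alpha> - 2 * \<beta>)) / 4"
proof -
  have sum_cos: "cos (\<alpha> + 2 * \<beta>) + cos (\<alpha> - 2 * \<beta>) = 2 * cos \<alpha> * (2 * cos \<beta> ^ 2 - 1)"
    by (simp add: cos_add cos_diff cos_double_cos)
  have "cos (3 * \<alpha>) - 3 * cos \<alpha> - 3 * cos (\<alpha> + 2 * \<beta>) - 3 * cos (\<alpha> - 2 * \<beta>)
      = cos (3 * \<alpha>) - 3 * cos \<alpha> - 3 * (cos (\<alpha> + 2 * \<beta>) + cos (\<alpha> - 2 * \<beta>))"
    by (simp add: algebra_simps)
  also have "\<dots> = (4 * cos \<alpha> ^ 3 - 3 * cos \<alpha>) - 3 * cos \<alpha> - 3 * (2 * cos \<alpha> * (2 * cos \<beta> ^ 2 - 1))"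
    by (simp only: cos_treble_cos sum_cos)
  also have "\<dots> = 4 * (cos \<alpha> ^ 3 - 3 * cos \<alpha> * cos \<beta> ^ 2)"
    by (simp add: algebra_simps)
  finally show ?thesis
    by simp
qed

lemma root_sum_cos_mult_cos:
  assumes "n > 0" and "\<not> int n dvd (a + b)" and "\<not> int n dvd (a - b) \<or> cos (\<phi> - \<psi>) = 0"
  shows "root_sum n (\<lambda>t. cos (t * of_int a - \<phi>) * cos (t * of_int b - \<psi>)) = 0"
proof -
  have expand: "cos (t * of_int a - \<phi>) * cos (t * of_int b - \<psi>)
      = (cos (t * of_int (a - b) - (\<phi> - \<psi>)) + cos (t * of_int (a + b) - (\<phi> + \<psi>))) / 2" for t
    by (simp add: cos_times_cos algebra_simps)
  have "root_sum n (\<lambda>t. cos (t * of_int (a - b) - (\<phi> - \<psi>))) = 0"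
    using assms(1,3) by (rule root_sum_cos_eq_0)
  moreover have "root_sum n (\<lambda>t. cos (t * of_int (a + b) - (\<phi> + \<psi>))) = 0"
    by (intro root_sum_cos_eq_0 disjI1 assms(1,2))
  ultimately show ?thesis
    unfolding expand root_sum_divide root_sum_add by simp
qed

lemma root_sum_cos_mult_cos_mult_cos:
  assumes "n > 0"
    and "\<not> int n dvd (a - b - c)" "\<not> int n dvd (a - b + c)"
    and "\<not> int n dvd (a + b - c)" "\<not> int n dvd (a + b + c)"
  shows "root_sum n (\<lambda>t. cos (t * of_int a - \<phi>) * cos (t * of_int b - \<psi>) * cos (t * of_int c - \<chi>)) = 0"
proof -
  have expand: "cos (t * of_int a - \<phi>) * cos (t * of_int b - \<psi>) * cos (t * of_int c - \<chi>)
      = (cos (t * of_int (a - b - c) - (\<phi> - \<psi> - \<chi>)) + cos (t * of_int (a - b + c) - (\<phi> - \<psi> + \<chi>))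
         + cos (t * of_int (a + b - c) - (\<phi> + \<psi> - \<chi>)) + cos (t * of_int (a + b + c) - (\<phi> + \<psi> + \<chi>))) / 4" for t
    using cos_times_cos_times_cos[of "t * of_int a - \<phi>" "t * of_int b - \<psi>" "t * of_int c - \<chi>"]
    by (simp add: algebra_simps)
  have "root_sum n (\<lambda>t. cos (t * of_int (a - b - c) - (\<phi> - \<psi> - \<chi>))) = 0"
    and "root_sum n (\<lambda>t. cos (t * of_int (a - b + c) - (\<phi> - \<psi> + \<chi>))) = 0"
    and "root_sum n (\<lambda>t. cos (t * of_int (a + b - c) - (\<phi> + \<psi> - \<chi>))) = 0"
    and "root_sum n (\<lambda>t. cos (t * of_int (a + b + c) - (\<phi> + \<psi> + \<chi>))) = 0"
    by (intro root_sum_cos_eq_0 disjI1 assms)+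
  then show ?thesis
    unfolding expand root_sum_divide root_sum_add by simp
qed

lemma root_sum_cos_squared_diff:
  assumes "n > 0" and "\<not> int n dvd (2 * a)" and "\<not> int n dvd (2 * b)"
  shows "root_sum n (\<lambda>t. cos (t * of_int a - \<phi>) ^ 2 - cos (t * of_int b - \<psi>) ^ 2) = 0"
proof -
  have expand: "cos (t * of_int a - \<phi>) ^ 2 - cos (t * of_int b - \<psi>) ^ 2
      = (cos (t * of_int (2 * a) - 2 * \<phi>) - cos (t * of_int (2 * b) - 2 * \<psi>)) / 2" for t
    using cos_squared_diff_cos_squared[of "t * of_int a - \<phi>" "t * of_int b - \<psi>"]
    by (simp add: algebra_simps)
  have "root_sum n (\<lambda>t. cos (t * of_int (2 * a) - 2 * \<phi>)) = 0"
    and "root_sum n (\<lambda>t. cos (t * of_int (2 * b) - 2 * \<psi>)) = 0"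
    by (intro root_sum_cos_eq_0 disjI1 assms)+
  then show ?thesis
    unfolding expand root_sum_divide root_sum_diff by simp
qed

lemma root_sum_cos_cubed_minus_cos_times_cos_squared:
  assumes "n > 0"
    and "\<not> int n dvd a" "\<not> int n dvd (3 * a)" "\<not> int n dvd (a + 2 * b)" "\<not> int n dvd (a - 2 * b)"
  shows "root_sum n (\<lambda>t. cos (t * of_int a - \<phi>) ^ 3 - 3 * cos (t * of_int a - \<phi>) * cos (t * of_int b - \<psi>) ^ 2) = 0"
proof -
  have expand: "cos (t * of_int a - \<phi>) ^ 3 - 3 * cos (t * of_int a - \<phi>) * cos (t * of_int b - \<psi>) ^ 2
      = (cos (t * of_int (3 * a) - 3 * \<phi>) - 3 * cos (t * of_int a - \<phi>)
         - 3 * cos (t * of_int (a + 2 * b) - (\<phi> + 2 * \<psi>))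
         - 3 * cos (t * of_int (a - 2 * b) - (\<phi> - 2 * \<psi>))) / 4" for t
    using cos_cubed_minus_cos_times_cos_squared[of "t * of_int a - \<phi>" "t * of_int b - \<psi>"]
    by (simp add: algebra_simps)
  have "root_sum n (\<lambda>t. cos (t * of_int (3 * a) - 3 * \<phi>)) = 0"
    and "root_sum n (\<lambda>t. cos (t * of_int a - \<phi>)) = 0"
    and "root_sum n (\<lambda>t. cos (t * of_int (a + 2 * b) - (\<phi> + 2 * \<psi>))) = 0"
    and "root_sum n (\<lambda>t. cos (t * of_int (a - 2 * b) - (\<phi> - 2 * \<psi>))) = 0"
    by (intro root_sum_cos_eq_0 disjI1 assms)+
  then show ?thesis
    unfolding expand root_sum_divide root_sum_diff root_sum_cmult by simp
qed

lemma sidon_type_not_dvd: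
  assumes "sidon_type S t n" and "length xs = t"
    and "\<forall>(\<epsilon>, x) \<in> set xs. \<epsilon> \<in> {-1, 0, 1} \<and> x \<in> S"
    and "\<exists>(\<epsilon>, x) \<in> set xs. \<epsilon> \<noteq> 0"
    and "\<forall>(\<epsilon>, x) \<in> set xs. \<forall>(\<epsilon>', x') \<in> set xs. \<epsilon> = 1 \<and> \<epsilon>' = -1 \<longrightarrow> x \<noteq> x'"
  shows "\<not> int n dvd (\<Sum>(\<epsilon>, x) \<leftarrow> xs. \<epsilon> * x)"
proof -
  define \<epsilon> where "\<epsilon> i = fst (xs ! i)" for i
  define x where "x i = snd (xs ! i)" for i
  have "\<forall>i<t. \<epsilon> i \<in> {-1, 0, 1} \<and> x i \<in> S"
    using assms(2,3) by (auto simp: \<epsilon>_def x_def dest!: nth_mem)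
  moreover have "\<exists>i<t. \<epsilon> i \<noteq> 0"
    using assms(2,4) by (force simp: \<epsilon>_def in_set_conv_nth)
  moreover have "\<not> (\<exists>i<t. \<exists>j<t. \<epsilon> i = 1 \<and> \<epsilon> j = -1 \<and> x i = x j)"
    using assms(2,5) by (fastforce simp: \<epsilon>_def x_def dest!: nth_mem)
  ultimately have "\<not> int n dvd (\<Sum>i<t. \<epsilon> i * x i)"
    using assms(1) by (auto simp: sidon_type_def cong_0_iff)
  moreover have "(\<Sum>(\<epsilon>, x) \<leftarrow> xs. \<epsilon> * x) = (\<Sum>i<t. \<epsilon> i * x i)"
    using assms(2) by (simp add: sum_list_sum_nth atLeast0LessThan \<epsilon>_def x_def case_prod_beta)
  ultimately show ?thesis
    by simp
qed

definition row_phase :: "nat \<Rightarrow> real" where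
  "row_phase r = (if even r then pi / 2 else 0)"

lemma Amat_eq_cos:
  "r < 2 * e \<Longrightarrow> Amat e n m r k = cos (2 * pi / real n * real k * of_int (m (r div 2)) - row_phase r)"
  by (simp add: Amat_def row_phase_def cos_diff)

lemma eval_cols_Amat_coord:
  assumes "n > 0" and sidon: "sidon_type (m ` {..<e}) 1 n" and "i < 2 * e"
  shows "eval_cols (\<lambda>x. x i) (Amat e n m) n = 0"
proof -
  have "\<not> int n dvd m (i div 2)"
    using sidon_type_not_dvd[OF sidon, where xs = "[(1, m (i div 2))]"] assms(3) by auto
  then have "root_sum n (\<lambda>t. cos (t * of_int (m (i div 2)) - row_phase i)) = 0"
    by (intro root_sum_cos_eq_0 disjI1 assms(1))
  then show ?thesis
    using assms(3) by (simp add: eval_cols_def root_sum_def Amat_eq_cos)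
qed

lemma eval_cols_Amat_coord_mult:
  assumes "n > 0" and "inj_on m {..<e}" and sidon: "sidon_type (m ` {..<e}) 2 n"
    and "i < j" and "j < 2 * e"
  shows "eval_cols (\<lambda>x. x i * x j) (Amat e n m) n = 0"
proof -
  define a b where "a = m (i div 2)" and "b = m (j div 2)"
  have S: "a \<in> m ` {..<e}" "b \<in> m ` {..<e}"
    using assms(4,5) by (auto simp: a_def b_def)
  have "\<not> int n dvd (a + b)"
    using sidon_type_not_dvd[OF sidon, where xs = "[(1, a), (1, b)]"] S by auto
  moreover have "\<not> int n dvd (a - b) \<or> cos (row_phase i - row_phase j) = 0"
  proof (cases "i div 2 = j div 2")
    case True
    then have "even i" and "odd j"
      using assms(4) by presburger+
    then show ?thesis
      by (simp add: row_phase_def)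
  next
    case False
    then have "a \<noteq> b"
      using assms(2,4,5) by (auto simp: a_def b_def inj_on_eq_iff)
    then show ?thesis
      using sidon_type_not_dvd[OF sidon, where xs = "[(1, a), (-1, b)]"] S by auto
  qed
  ultimately have "root_sum n (\<lambda>t. cos (t * of_int a - row_phase i) * cos (t * of_int b - row_phase j)) = 0"
    by (rule root_sum_cos_mult_cos[OF assms(1)])
  then show ?thesis
    using assms(4,5) by (simp add: eval_cols_def root_sum_def Amat_eq_cos a_def b_def)
qed

lemma eval_cols_Amat_coord_squared_diff:
  assumes "n > 0" and sidon: "sidon_type (m ` {..<e}) 2 n" and "i + 1 < 2 * e"
  shows "eval_cols (\<lambda>x. x i ^ 2 - x (i + 1) ^ 2) (Amat e n m) n = 0"
proof -
  define a b where "a = m (i div 2)" and "b = m ((i + 1) div 2)"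
  have S: "a \<in> m ` {..<e}" "b \<in> m ` {..<e}"
    using assms(3) by (auto simp: a_def b_def)
  have "\<not> int n dvd (2 * a)" and "\<not> int n dvd (2 * b)"
    using sidon_type_not_dvd[OF sidon, where xs = "[(1, a), (1, a)]"]
      sidon_type_not_dvd[OF sidon, where xs = "[(1, b), (1, b)]"] S
    by auto
  then have "root_sum n (\<lambda>t. cos (t * of_int a - row_phase i) ^ 2 - cos (t * of_int b - row_phase (i + 1)) ^ 2) = 0"
    by (rule root_sum_cos_squared_diff[OF assms(1)])
  then show ?thesis
    using assms(3) by (simp add: eval_cols_def root_sum_def Amat_eq_cos a_def b_def)
qed

lemma eval_cols_Amat_coord_mult3:
  assumes "n > 0" and "inj_on m {..<e}" and sidon: "sidon_type (m ` {..<e}) 3 n"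
    and "i < j" and "j < k" and "k < 2 * e"
  shows "eval_cols (\<lambda>x. x i * x j * x k) (Amat e n m) n = 0"
proof -
  define a b c where "a = m (i div 2)" and "b = m (j div 2)" and "c = m (k div 2)"
  have S: "a \<in> m ` {..<e}" "b \<in> m ` {..<e}" "c \<in> m ` {..<e}"
    using assms(4-6) by (auto simp: a_def b_def c_def)
  have "i div 2 < k div 2"
    using assms(4,5) by presburger
  with assms(2,6) have "a \<noteq> c"
    by (auto simp: a_def c_def inj_on_eq_iff)
  have "\<not> int n dvd (a - b - c) \<and> \<not> int n dvd (a - b + c) \<and> \<not> int n dvd (a + b - c) \<and> \<not> int n dvd (a + b + c)"
  proof (cases "a = b"; cases "b = c")
    assume "a = b" "b = c"
    with \<open>a \<noteq> c\<close> show ?thesis by simp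
  next
    assume "a = b" "b \<noteq> c"
    then show ?thesis
      using sidon_type_not_dvd[OF sidon, where xs = "[(0, a), (0, a), (-1, c)]"]
        sidon_type_not_dvd[OF sidon, where xs = "[(0, a), (0, a), (1, c)]"]
        sidon_type_not_dvd[OF sidon, where xs = "[(1, a), (1, a), (-1, c)]"]
        sidon_type_not_dvd[OF sidon, where xs = "[(1, a), (1, a), (1, c)]"] S
      by auto
  next
    assume "a \<noteq> b" "b = c"
    then show ?thesis
      using sidon_type_not_dvd[OF sidon, where xs = "[(1, a), (-1, b), (-1, b)]"]
        sidon_type_not_dvd[OF sidon, where xs = "[(1, a), (0, b), (0, b)]"]
        sidon_type_not_dvd[OF sidon, where xs = "[(1, a), (1, b), (1, b)]"] S
      by (auto simp: algebra_simps)
  next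
    assume "a \<noteq> b" "b \<noteq> c"
    with \<open>a \<noteq> c\<close> show ?thesis
      using sidon_type_not_dvd[OF sidon, where xs = "[(1, a), (-1, b), (-1, c)]"]
        sidon_type_not_dvd[OF sidon, where xs = "[(1, a), (-1, b), (1, c)]"]
        sidon_type_not_dvd[OF sidon, where xs = "[(1, a), (1, b), (-1, c)]"]
        sidon_type_not_dvd[OF sidon, where xs = "[(1, a), (1, b), (1, c)]"] S
      by (auto simp: algebra_simps)
  qed
  then have "root_sum n (\<lambda>t. cos (t * of_int a - row_phase i) * cos (t * of_int b - row_phase j)
      * cos (t * of_int c - row_phase k)) = 0"
    by (intro root_sum_cos_mult_cos_mult_cos assms(1)) auto
  then show ?thesis
    using assms(4-6) by (simp add: eval_cols_def root_sum_def Amat_eq_cos a_def b_def c_def)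
qed

lemma eval_cols_Amat_coord_cubic:
  assumes "n > 0" and sidon: "sidon_type (m ` {..<e}) 3 n" and "i < 2 * e" and "j < 2 * e"
  shows "eval_cols (\<lambda>x. x i ^ 3 - 3 * x i * x j ^ 2) (Amat e n m) n = 0"
proof -
  define a b where "a = m (i div 2)" and "b = m (j div 2)"
  have S: "a \<in> m ` {..<e}" "b \<in> m ` {..<e}"
    using assms(3,4) by (auto simp: a_def b_def)
  have a: "\<not> int n dvd a" and a3: "\<not> int n dvd (3 * a)"
    using sidon_type_not_dvd[OF sidon, where xs = "[(1, a), (0, a), (0, a)]"]
      sidon_type_not_dvd[OF sidon, where xs = "[(1, a), (1, a), (1, a)]"] S
    by auto
  have "\<not> int n dvd (a + 2 * b) \<and> \<not> int n dvd (a - 2 * b)"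
  proof (cases "a = b")
    case True
    with a a3 show ?thesis by simp
  next
    case False
    then show ?thesis
      using sidon_type_not_dvd[OF sidon, where xs = "[(1, a), (1, b), (1, b)]"]
        sidon_type_not_dvd[OF sidon, where xs = "[(1, a), (-1, b), (-1, b)]"] S
      by auto
  qed
  with a a3 have "root_sum n (\<lambda>t. cos (t * of_int a - row_phase i) ^ 3
      - 3 * cos (t * of_int a - row_phase i) * cos (t * of_int b - row_phase j) ^ 2) = 0"
    by (intro root_sum_cos_cubed_minus_cos_times_cos_squared assms(1)) auto
  then show ?thesis
    using assms(3,4) by (simp add: eval_cols_def root_sum_def Amat_eq_cos a_def b_def)
qed

theorem lemma5p1:
  fixes n e s :: nat and m :: "nat \<Rightarrow> int" and f :: "(nat \<Rightarrow> real) \<Rightarrow> real"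
  assumes "n > 0" and "e > 0" and "s \<in> {1, 2, 3}"
    and "inj_on m {..<e}"
    and "sidon_type (m ` {..<e}) s n"
    and "f \<in> Phi s (2 * e - 1)"
  shows "eval_cols f (Amat e n m) n = 0"
proof -
  consider "s = 1" | "s = 2" | "s = 3"
    using assms(3) by auto
  then show ?thesis
  proof cases
    case 1
    with assms(2,6) obtain i where "f = (\<lambda>x. x i)" and "i < 2 * e"
      by (auto simp: Phi_def Phi1_def)
    with 1 show ?thesis
      using assms(1,5) by (simp add: eval_cols_Amat_coord)
  next
    case 2
    \<comment> \<open>passed as a fact, so that its \<open>i + 1\<close> is normalised to \<open>Suc i\<close> like the goal\<close>
    then show ?thesis
      using assms(1,2,4-6) eval_cols_Amat_coord_squared_diff[OF assms(1)]
      by (auto simp: Phi_def Phi2_def intro: eval_cols_Amat_coord_mult)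
  next
    case 3
    then show ?thesis
      using assms(1,2,4-6)
      by (auto simp: Phi_def Phi3_def intro: eval_cols_Amat_coord_mult3 eval_cols_Amat_coord_cubic)
  qed
qed

end
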